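(* Let $\beta\in\mathcal{A}$ and let $f=\sum_{\alpha\in\mathcal{A}}c_\alpha\mathrm{e}^\alpha\in C_X(\mathcal{A},\beta)$ with $c_\beta<0$. Suppose $\nu\in\mathbb{R}^{\mathcal{A}}$ satisfies the relative entropy condition $\mathbf{1}^T\nu=0$, $\nu\ne0$ and $\sigma_X(-\mathcal{A}\nu)+D(\nu_{\setminus\beta},e\,c_{\setminus\beta})\le c_\beta$. If $\nu=\sum_{i=1}^k\theta_i\nu^{(i)}$ is a convex combination (with $\theta_i>0$, $\sum\theta_i=1$) of pairwise non-proportional vectors $\nu^{(i)}\in N_\beta$ ($k\ge2$) and the map $\tilde\nu\mapsto\sigma_X(-\mathcal{A}\tilde\nu)$ is affine on $\operatorname{conv}\{\nu^{(1)},\dots,\nu^{(k)}\}$, then $f$ does not generate an extreme ray of $C_X(\mathcal{A},\beta)$.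
   Context: $X\subset\mathbb{R}^n$ is a nonempty closed convex set and $\mathcal{A}\subset\mathbb{R}^n$ is a nonempty finite set such that the functions $x\mapsto\exp(\alpha^Tx)$, $\alpha\in\mathcal{A}$, are linearly independent on $X$. $\mathbb{R}^{\mathcal{A}}$ denotes real vectors indexed by $\mathcal{A}$; for $c\in\mathbb{R}^{\mathcal{A}}$, $c_{\setminus\beta}\in\mathbb{R}^{\mathcal{A}\setminus\{\beta\}}$ deletes the $\beta$-entry. $\mathcal{A}$ is viewed as the linear map $\mathbb{R}^{\mathcal{A}}\to\mathbb{R}^n$, $\mathcal{A}\nu=\sum_{\alpha}\alpha\nu_\alpha$. $\sigma_X(y)=\sup\{y^Tx:x\in X\}$. $N_\beta=\{\nu\in\mathbb{R}^{\mathcal{A}}:\nu_\alpha\ge0\ \forall\alpha\neq\beta,\ \sum_\alpha\nu_\alpha=0\}$. A signomial supported on $\mathcal{A}$ is $f=\sum_{\alpha\in\mathcal{A}}c_\alpha\mathrm{e}^\alpha$ with $\mathrm{e}^\alpha(x)=\exp(\alpha^Tx)$, identified with its coefficient vector $c$. For $\beta\in\mathcal{A}$, the $X$-AGE cone $C_X(\mathcal{A},\beta)$ is the set of signomials supported on $\mathcal{A}$ that are nonnegative on $X$ and satisfy $c_\alpha\ge0$ for all $\alpha\neq\beta$. The relative entropy is $D(\nu,c)=\sum_\alpha\nu_\alpha\log(\nu_\alpha/c_\alpha)$, continuously extended to nonnegative arguments (with $0\log(0/c)=0$, $\nu\log(\nu/0)=+\infty$ for $\nu>0$), and $D(\nu,c)=+\infty$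 if $\nu$ or $c$ has a negative entry; $e$ is Euler's number. (It is known that $f\in C_X(\mathcal{A},\beta)$ iff some nonzero $\nu$ satisfies the relative entropy condition above.) *)

theory Defs
  imports "HOL-Analysis.Analysis"
begin

text \<open>Vectors in R^A, for a finite set A of exponent vectors in R^n, are represented as
  functions on the ambient space R^n that vanish outside A.\<close>
definition rvec :: "('a::real_vector) set \<Rightarrow> ('a \<Rightarrow> real) set" where
  "rvec A = {v. \<forall>x. x \<notin> A \<longrightarrow> v x = 0}"

definition Amap :: "('a::real_vector) set \<Rightarrow> ('a \<Rightarrow> real) \<Rightarrow> 'a" where
  "Amap A \<nu> = (\<Sum>\<alpha>\<in>A. \<nu> \<alpha> *\<^sub>R \<alpha>)"

definition supp_fun :: "('a::real_inner) set \<Rightarrow> 'a \<Rightarrow> ereal" where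
  "supp_fun X y = (SUP x\<in>X. ereal (y \<bullet> x))"

definition signomial :: "('a::real_inner) set \<Rightarrow> ('a \<Rightarrow> real) \<Rightarrow> 'a \<Rightarrow> real" where
  "signomial A c x = (\<Sum>\<alpha>\<in>A. c \<alpha> * exp (\<alpha> \<bullet> x))"

definition exp_lin_indep :: "('a::real_inner) set \<Rightarrow> 'a set \<Rightarrow> bool" where
  "exp_lin_indep X A \<longleftrightarrow>
     (\<forall>c. (\<forall>x\<in>X. signomial A c x = 0) \<longrightarrow> (\<forall>\<alpha>\<in>A. c \<alpha> = 0))"

definition AGE_cone :: "('a::real_inner) set \<Rightarrow> 'a set \<Rightarrow> 'a \<Rightarrow> ('a \<Rightarrow> real) set" where
  "AGE_cone X A \<beta> = {c \<in> rvec A. (\<forall>x\<in>X. signomial A c x \<ge> 0) \<and> (\<forall>\<alpha>\<in>A - {\<beta>}. c \<alpha> \<ge> 0)}"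

definition N_set :: "('a::real_vector) set \<Rightarrow> 'a \<Rightarrow> ('a \<Rightarrow> real) set" where
  "N_set A \<beta> = {\<nu> \<in> rvec A. (\<forall>\<alpha>\<in>A - {\<beta>}. \<nu> \<alpha> \<ge> 0) \<and> (\<Sum>\<alpha>\<in>A. \<nu> \<alpha>) = 0}"

text \<open>Relative entropy D(nu, c) over the index set S, continuously extended, +infinity on
  negative entries.\<close>
definition rel_entr :: "'a set \<Rightarrow> ('a \<Rightarrow> real) \<Rightarrow> ('a \<Rightarrow> real) \<Rightarrow> ereal" where
  "rel_entr S \<nu> c =
     (if (\<exists>\<alpha>\<in>S. \<nu> \<alpha> < 0 \<or> c \<alpha> < 0) \<or> (\<exists>\<alpha>\<in>S. \<nu> \<alpha> > 0 \<and> c \<alpha> = 0) then \<infinity>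
      else ereal (\<Sum>\<alpha>\<in>S. if \<nu> \<alpha> = 0 then 0 else \<nu> \<alpha> * ln (\<nu> \<alpha> / c \<alpha>)))"

definition generates_extreme_ray :: "('a \<Rightarrow> real) set \<Rightarrow> ('a \<Rightarrow> real) \<Rightarrow> bool" where
  "generates_extreme_ray C c \<longleftrightarrow> c \<in> C \<and> c \<noteq> (\<lambda>_. 0) \<and>
     (\<forall>g\<in>C. \<forall>h\<in>C. c = (\<lambda>\<alpha>. g \<alpha> + h \<alpha>) \<longrightarrow>
        (\<exists>r\<ge>0. g = (\<lambda>\<alpha>. r * c \<alpha>)) \<and> (\<exists>r\<ge>0. h = (\<lambda>\<alpha>. r * c \<alpha>)))"

definition proportional :: "('a \<Rightarrow> real) \<Rightarrow> ('a \<Rightarrow> real) \<Rightarrow> bool" where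
  "proportional u v \<longleftrightarrow> (\<exists>r. u = (\<lambda>\<alpha>. r * v \<alpha>)) \<or> (\<exists>r. v = (\<lambda>\<alpha>. r * u \<alpha>))"

definition conv_fam :: "nat \<Rightarrow> (nat \<Rightarrow> 'a \<Rightarrow> real) \<Rightarrow> ('a \<Rightarrow> real) set" where
  "conv_fam k \<nu>s = {(\<lambda>\<alpha>. \<Sum>i<k. t i * \<nu>s i \<alpha>) | t. (\<forall>i<k. t i \<ge> 0) \<and> (\<Sum>i<k. t i) = 1}"

definition affine_on_ereal :: "('a \<Rightarrow> real) set \<Rightarrow> (('a \<Rightarrow> real) \<Rightarrow> ereal) \<Rightarrow> bool" where
  "affine_on_ereal S \<phi> \<longleftrightarrow> (\<forall>u\<in>S. \<forall>v\<in>S. \<forall>t::real. 0 \<le> t \<and> t \<le> 1 \<longrightarrow>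
      \<phi> (\<lambda>\<alpha>. t * u \<alpha> + (1 - t) * v \<alpha>) = ereal t * \<phi> u + ereal (1 - t) * \<phi> v)"

end

theory Submission
  imports Defs
begin

text \<open>
  If \<open>\<sigma>\<^sub>X(-\<A>\<nu>) + D(\<nu>, e c) \<le> c\<^sub>\<beta>\<close> (entropy over \<open>\<alpha> \<noteq> \<beta>\<close>), the certificate can be cut along any
  decomposition \<open>\<nu> = p + q\<close> with \<open>p, q\<close> in (a scaling of) \<open>N\<^sub>\<beta>\<close>: share the coefficients
  \<open>c\<^sub>\<alpha>\<close>, \<open>\<alpha> \<noteq> \<beta>\<close>, in the ratio \<open>p\<^sub>\<alpha> : q\<^sub>\<alpha>\<close>, so that the relative entropy splits exactly,
  and distribute \<open>c\<^sub>\<beta>\<close> using that \<open>\<sigma>\<^sub>X(-\<A>\<cdot>)\<close> is affine along the segment. Both parts then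
  carry their own certificate, hence lie in the AGE cone, and the first is a multiple of \<open>c\<close>
  only if \<open>p\<close> is a multiple of \<open>\<nu>\<close>. Pairwise non-proportionality of the \<open>\<nu>\<^sub>i\<close> yields a
  summand \<open>\<theta>\<^sub>i \<nu>\<^sub>i\<close> that is not.
\<close>

lemma mult_exp_ge_entropy_bound:
  fixes g p s :: real
  assumes "0 \<le> g" "0 \<le> p" "0 < p \<Longrightarrow> 0 < g"
  shows "p * s - p * ln (p / (exp 1 * g)) \<le> g * exp s"
proof (cases "p = 0")
  case True
  then show ?thesis using assms by simp
next
  case False
  then have p: "0 < p" and g: "0 < g" using assms by auto
  define y where "y = s - ln (p / g)"
  have "p * s - p * ln (p / (exp 1 * g)) = p * (1 + y)"
    using p g by (simp add: y_def ln_div ln_mult algebra_simps)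
  also have "\<dots> \<le> p * exp y"
    using p by (simp add: exp_ge_add_one_self)
  also have "\<dots> = g * exp s"
    using p g by (simp add: y_def exp_diff)
  finally show ?thesis .
qed

lemma signomial_factor_exp:
  assumes "finite A" "\<beta> \<in> A"
  shows "signomial A g x = exp (\<beta> \<bullet> x) * (g \<beta> + (\<Sum>\<alpha>\<in>A - {\<beta>}. g \<alpha> * exp ((\<alpha> - \<beta>) \<bullet> x)))"
  using sum.remove[OF assms, of "\<lambda>\<alpha>. g \<alpha> * exp (\<alpha> \<bullet> x)"]
  by (simp add: signomial_def sum_distrib_left inner_diff_left exp_diff algebra_simps)

lemma Amap_inner_sum_zero:
  assumes "finite A" "\<beta> \<in> A" "(\<Sum>\<alpha>\<in>A. p \<alpha>) = 0"
  shows "Amap A p \<bullet> x = (\<Sum>\<alpha>\<in>A - {\<beta>}. p \<alpha> * ((\<alpha> - \<beta>) \<bullet> x))"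
proof -
  have p\<beta>: "p \<beta> = - (\<Sum>\<alpha>\<in>A - {\<beta>}. p \<alpha>)"
    using assms sum.remove[OF assms(1,2), of p] by simp
  have "Amap A p \<bullet> x = p \<beta> * (\<beta> \<bullet> x) + (\<Sum>\<alpha>\<in>A - {\<beta>}. p \<alpha> * (\<alpha> \<bullet> x))"
    using sum.remove[OF assms(1,2), of "\<lambda>\<alpha>. p \<alpha> * (\<alpha> \<bullet> x)"]
    by (simp add: Amap_def inner_sum_left)
  also have "\<dots> = (\<Sum>\<alpha>\<in>A - {\<beta>}. p \<alpha> * ((\<alpha> - \<beta>) \<bullet> x))"
    by (simp add: p\<beta> sum_distrib_right inner_diff_left right_diff_distrib sum_subtractf)
  finally show ?thesis .
qed

text \<open>The relative entropy certificate bounds every term of the dehomogenised signomial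
  from below by the Fenchel--Young inequality for \<open>exp\<close>.\<close>
lemma signomial_nonneg_if_entropy_certificate:
  assumes fin: "finite A" and \<beta>: "\<beta> \<in> A"
    and g: "\<forall>\<alpha>\<in>A - {\<beta>}. 0 \<le> g \<alpha>" and p: "\<forall>\<alpha>\<in>A - {\<beta>}. 0 \<le> p \<alpha>"
    and pg: "\<forall>\<alpha>\<in>A - {\<beta>}. 0 < p \<alpha> \<longrightarrow> 0 < g \<alpha>"
    and psum: "(\<Sum>\<alpha>\<in>A. p \<alpha>) = 0"
    and cert: "- (Amap A p \<bullet> x) + (\<Sum>\<alpha>\<in>A - {\<beta>}. p \<alpha> * ln (p \<alpha> / (exp 1 * g \<alpha>))) \<le> g \<beta>"
  shows "0 \<le> signomial A g x"
proof -
  let ?B = "A - {\<beta>}"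
  have "Amap A p \<bullet> x - (\<Sum>\<alpha>\<in>?B. p \<alpha> * ln (p \<alpha> / (exp 1 * g \<alpha>)))
      = (\<Sum>\<alpha>\<in>?B. p \<alpha> * ((\<alpha> - \<beta>) \<bullet> x) - p \<alpha> * ln (p \<alpha> / (exp 1 * g \<alpha>)))"
    by (simp add: Amap_inner_sum_zero[OF fin \<beta> psum] sum_subtractf)
  also have "\<dots> \<le> (\<Sum>\<alpha>\<in>?B. g \<alpha> * exp ((\<alpha> - \<beta>) \<bullet> x))"
    using g p pg by (intro sum_mono mult_exp_ge_entropy_bound) auto
  finally have "0 \<le> g \<beta> + (\<Sum>\<alpha>\<in>?B. g \<alpha> * exp ((\<alpha> - \<beta>) \<bullet> x))"
    using cert by linarith
  then show ?thesis
    by (simp add: signomial_factor_exp[OF fin \<beta>])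
qed

lemma AGE_cone_memI:
  assumes "finite A" "\<beta> \<in> A" "g \<in> rvec A"
    and "\<forall>\<alpha>\<in>A - {\<beta>}. 0 \<le> g \<alpha>" "\<forall>\<alpha>\<in>A - {\<beta>}. 0 \<le> p \<alpha>"
    and "\<forall>\<alpha>\<in>A - {\<beta>}. 0 < p \<alpha> \<longrightarrow> 0 < g \<alpha>" "(\<Sum>\<alpha>\<in>A. p \<alpha>) = 0"
    and "\<forall>x\<in>X. - (Amap A p \<bullet> x) \<le> S"
    and "S + (\<Sum>\<alpha>\<in>A - {\<beta>}. p \<alpha> * ln (p \<alpha> / (exp 1 * g \<alpha>))) \<le> g \<beta>"
  shows "g \<in> AGE_cone X A \<beta>"
  unfolding AGE_cone_def
  using assms signomial_nonneg_if_entropy_certificate[OF assms(1,2,4-7)] by force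

lemma entropy_sum_of_share:
  fixes p \<nu> c g :: "'a \<Rightarrow> real"
  assumes "\<forall>\<alpha>\<in>B. 0 \<le> p \<alpha> \<and> p \<alpha> \<le> \<nu> \<alpha>"
    and "\<forall>\<alpha>\<in>B. 0 < \<nu> \<alpha> \<longrightarrow> 0 < c \<alpha> \<and> g \<alpha> = p \<alpha> * c \<alpha> / \<nu> \<alpha>"
  shows "(\<Sum>\<alpha>\<in>B. p \<alpha> * ln (p \<alpha> / (exp 1 * g \<alpha>)))
       = (\<Sum>\<alpha>\<in>B. if \<nu> \<alpha> = 0 then 0 else p \<alpha> * ln (\<nu> \<alpha> / (exp 1 * c \<alpha>)))"
proof (rule sum.cong)
  fix \<alpha> assume \<alpha>: "\<alpha> \<in> B"
  show "p \<alpha> * ln (p \<alpha> / (exp 1 * g \<alpha>)) = (if \<nu> \<alpha> = 0 then 0 else p \<alpha> * ln (\<nu> \<alpha> / (exp 1 * c \<alpha>)))"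
  proof (cases "p \<alpha> = 0")
    case False
    from \<alpha> assms(1) have "0 \<le> p \<alpha>" "p \<alpha> \<le> \<nu> \<alpha>" by auto
    with False have "0 < p \<alpha>" by (auto simp: less_le)
    with \<open>p \<alpha> \<le> \<nu> \<alpha>\<close> have "0 < \<nu> \<alpha>" by linarith
    moreover from \<alpha> assms(2) \<open>0 < \<nu> \<alpha>\<close>
    have "0 < c \<alpha>" "g \<alpha> = p \<alpha> * c \<alpha> / \<nu> \<alpha>" by auto
    ultimately have "p \<alpha> / (exp 1 * g \<alpha>) = \<nu> \<alpha> / (exp 1 * c \<alpha>)"
      using \<open>0 < p \<alpha>\<close> by simp
    with \<open>0 < \<nu> \<alpha>\<close> show ?thesis by simp
  qed simp
qed simp

lemma AGE_cone_split:
  assumes fin: "finite A" and \<beta>: "\<beta> \<in> A" and c: "c \<in> AGE_cone X A \<beta>"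
    and p: "p \<in> rvec A" "\<forall>\<alpha>\<in>A - {\<beta>}. 0 \<le> p \<alpha>" "(\<Sum>\<alpha>\<in>A. p \<alpha>) = 0"
    and q: "q \<in> rvec A" "\<forall>\<alpha>\<in>A - {\<beta>}. 0 \<le> q \<alpha>" "(\<Sum>\<alpha>\<in>A. q \<alpha>) = 0"
    and \<nu>: "\<And>\<alpha>. \<nu> \<alpha> = p \<alpha> + q \<alpha>"
    and c_pos: "\<forall>\<alpha>\<in>A - {\<beta>}. 0 < \<nu> \<alpha> \<longrightarrow> 0 < c \<alpha>"
    and Sp: "\<forall>x\<in>X. - (Amap A p \<bullet> x) \<le> Sp" and Sq: "\<forall>x\<in>X. - (Amap A q \<bullet> x) \<le> Sq"
    and budget: "Sp + Sq + (\<Sum>\<alpha>\<in>A - {\<beta>}. if \<nu> \<alpha> = 0 then 0 else \<nu> \<alpha> * ln (\<nu> \<alpha> / (exp 1 * c \<alpha>)))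
      \<le> c \<beta>"
  obtains g h where "g \<in> AGE_cone X A \<beta>" "h \<in> AGE_cone X A \<beta>" "c = (\<lambda>\<alpha>. g \<alpha> + h \<alpha>)"
    and "\<forall>\<alpha>\<in>A - {\<beta>}. g \<alpha> * \<nu> \<alpha> = p \<alpha> * c \<alpha>"
proof -
  let ?B = "A - {\<beta>}"
  let ?E = "\<lambda>r. (\<Sum>\<alpha>\<in>?B. if \<nu> \<alpha> = 0 then 0 else r \<alpha> * ln (\<nu> \<alpha> / (exp 1 * c \<alpha>)))"
  \<comment> \<open>\<open>g \<beta>\<close> is exactly what \<open>g\<close>'s certificate needs; \<open>h\<close> inherits the rest of the budget.\<close>
  define g where "g = (\<lambda>\<alpha>. if \<alpha> \<in> ?B \<and> 0 < \<nu> \<alpha> then p \<alpha> * c \<alpha> / \<nu> \<alpha> else 0)(\<beta> := Sp + ?E p)"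
  define h where "h = (\<lambda>\<alpha>. c \<alpha> - g \<alpha>)"
  have c_rvec: "c \<in> rvec A" and c_nonneg: "\<forall>\<alpha>\<in>?B. 0 \<le> c \<alpha>"
    using c by (auto simp: AGE_cone_def)
  have g_share: "\<forall>\<alpha>\<in>?B. 0 < \<nu> \<alpha> \<longrightarrow> 0 < c \<alpha> \<and> g \<alpha> = p \<alpha> * c \<alpha> / \<nu> \<alpha>"
    and h_share: "\<forall>\<alpha>\<in>?B. 0 < \<nu> \<alpha> \<longrightarrow> 0 < c \<alpha> \<and> h \<alpha> = q \<alpha> * c \<alpha> / \<nu> \<alpha>"
    using c_pos by (auto simp: g_def h_def \<nu> field_simps)
  have Ep: "(\<Sum>\<alpha>\<in>?B. p \<alpha> * ln (p \<alpha> / (exp 1 * g \<alpha>))) = ?E p"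
    using p(2) q(2) g_share by (intro entropy_sum_of_share) (auto simp: \<nu>)
  have Eq: "(\<Sum>\<alpha>\<in>?B. q \<alpha> * ln (q \<alpha> / (exp 1 * h \<alpha>))) = ?E q"
    using p(2) q(2) h_share by (intro entropy_sum_of_share) (auto simp: \<nu>)
  have "?E p + ?E q = (\<Sum>\<alpha>\<in>?B. if \<nu> \<alpha> = 0 then 0 else \<nu> \<alpha> * ln (\<nu> \<alpha> / (exp 1 * c \<alpha>)))"
    by (simp add: sum.distrib[symmetric] \<nu> distrib_right if_distrib cong: if_cong)
  then have h\<beta>: "Sq + ?E q \<le> h \<beta>"
    using budget by (simp add: h_def g_def)
  have \<nu>_nonneg: "\<forall>\<alpha>\<in>?B. 0 \<le> \<nu> \<alpha>" using p(2) q(2) by (simp add: \<nu>)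
  have "g \<in> AGE_cone X A \<beta>"
  proof (rule AGE_cone_memI[OF fin \<beta> _ _ p(2) _ p(3) Sp])
    show "g \<in> rvec A" using \<beta> by (auto simp: rvec_def g_def)
    show "\<forall>\<alpha>\<in>?B. 0 \<le> g \<alpha>" using p(2) c_nonneg \<nu>_nonneg by (auto simp: g_def)
    show "\<forall>\<alpha>\<in>?B. 0 < p \<alpha> \<longrightarrow> 0 < g \<alpha>" using g_share q(2) by (force simp: \<nu>)
  qed (use Ep in \<open>simp add: g_def\<close>)
  moreover have "h \<in> AGE_cone X A \<beta>"
  proof (rule AGE_cone_memI[OF fin \<beta> _ _ q(2) _ q(3) Sq])
    show "h \<in> rvec A" using c_rvec \<beta> by (auto simp: rvec_def h_def g_def)
    show "\<forall>\<alpha>\<in>?B. 0 \<le> h \<alpha>"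
    proof
      fix \<alpha> assume "\<alpha> \<in> ?B"
      with h_share q(2) c_nonneg \<nu>_nonneg show "0 \<le> h \<alpha>"
        by (cases "\<nu> \<alpha> = 0") (auto simp: h_def g_def less_le)
    qed
    show "\<forall>\<alpha>\<in>?B. 0 < q \<alpha> \<longrightarrow> 0 < h \<alpha>" using h_share p(2) by (force simp: \<nu>)
  qed (use Eq h\<beta> in simp)
  moreover have "\<forall>\<alpha>\<in>?B. g \<alpha> * \<nu> \<alpha> = p \<alpha> * c \<alpha>"
  proof
    fix \<alpha> assume \<alpha>: "\<alpha> \<in> ?B"
    with p(2) q(2) have "\<nu> \<alpha> = 0 \<Longrightarrow> p \<alpha> = 0" by (simp add: \<nu> add_nonneg_eq_0_iff)
    with \<alpha> \<nu>_nonneg show "g \<alpha> * \<nu> \<alpha> = p \<alpha> * c \<alpha>" by (auto simp: g_def less_le)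
  qed
  ultimately show ?thesis using that by (simp add: h_def)
qed

lemma rvec_eq_scaled_if_sum_zero:
  assumes "finite A" "\<beta> \<in> A" "p \<in> rvec A" "\<nu> \<in> rvec A"
    and "(\<Sum>\<alpha>\<in>A. p \<alpha>) = 0" "(\<Sum>\<alpha>\<in>A. \<nu> \<alpha>) = 0"
    and "\<forall>\<alpha>\<in>A - {\<beta>}. p \<alpha> = r * \<nu> \<alpha>"
  shows "p = (\<lambda>\<alpha>. r * \<nu> \<alpha>)"
proof
  fix \<alpha>
  have "p \<beta> = - (\<Sum>\<alpha>\<in>A - {\<beta>}. r * \<nu> \<alpha>)"
    using assms(5,7) sum.remove[OF assms(1,2), of p] by simp
  also have "\<dots> = r * \<nu> \<beta>"
  proof -
    have "\<nu> \<beta> = - (\<Sum>\<alpha>\<in>A - {\<beta>}. \<nu> \<alpha>)"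
      using assms(6) sum.remove[OF assms(1,2), of \<nu>] by simp
    then show ?thesis by (simp add: sum_distrib_left)
  qed
  finally show "p \<alpha> = r * \<nu> \<alpha>"
    using assms(3,4,7) by (cases "\<alpha> \<in> A - {\<beta>}") (auto simp: rvec_def)
qed

lemma not_extreme_ray_if_AGE_split:
  assumes fin: "finite A" and \<beta>: "\<beta> \<in> A" and c: "c \<in> AGE_cone X A \<beta>"
    and p: "p \<in> rvec A" "\<forall>\<alpha>\<in>A - {\<beta>}. 0 \<le> p \<alpha>" "(\<Sum>\<alpha>\<in>A. p \<alpha>) = 0"
    and q: "q \<in> rvec A" "\<forall>\<alpha>\<in>A - {\<beta>}. 0 \<le> q \<alpha>" "(\<Sum>\<alpha>\<in>A. q \<alpha>) = 0"
    and \<nu>: "\<nu> = (\<lambda>\<alpha>. p \<alpha> + q \<alpha>)"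
    and c_pos: "\<forall>\<alpha>\<in>A - {\<beta>}. 0 < \<nu> \<alpha> \<longrightarrow> 0 < c \<alpha>"
    and Sp: "\<forall>x\<in>X. - (Amap A p \<bullet> x) \<le> Sp" and Sq: "\<forall>x\<in>X. - (Amap A q \<bullet> x) \<le> Sq"
    and budget: "Sp + Sq + (\<Sum>\<alpha>\<in>A - {\<beta>}. if \<nu> \<alpha> = 0 then 0 else \<nu> \<alpha> * ln (\<nu> \<alpha> / (exp 1 * c \<alpha>)))
      \<le> c \<beta>"
    and not_multiple: "\<forall>r. p \<noteq> (\<lambda>\<alpha>. r * \<nu> \<alpha>)"
  shows "\<not> generates_extreme_ray (AGE_cone X A \<beta>) c"
proof
  assume extreme: "generates_extreme_ray (AGE_cone X A \<beta>) c"
  have \<nu>_eq: "\<And>\<alpha>. \<nu> \<alpha> = p \<alpha> + q \<alpha>" by (simp add: \<nu>)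
  obtain g h where "g \<in> AGE_cone X A \<beta>" "h \<in> AGE_cone X A \<beta>" "c = (\<lambda>\<alpha>. g \<alpha> + h \<alpha>)"
    and g_share: "\<forall>\<alpha>\<in>A - {\<beta>}. g \<alpha> * \<nu> \<alpha> = p \<alpha> * c \<alpha>"
    by (rule AGE_cone_split[OF fin \<beta> c p q \<nu>_eq c_pos Sp Sq budget])
  with extreme obtain r where r: "g = (\<lambda>\<alpha>. r * c \<alpha>)"
    unfolding generates_extreme_ray_def by blast
  have "\<forall>\<alpha>\<in>A - {\<beta>}. p \<alpha> = r * \<nu> \<alpha>"
  proof
    fix \<alpha> assume \<alpha>: "\<alpha> \<in> A - {\<beta>}"
    show "p \<alpha> = r * \<nu> \<alpha>"
    proof (cases "\<nu> \<alpha> = 0")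
      case True
      with \<alpha> p(2) q(2) show ?thesis by (simp add: \<nu> add_nonneg_eq_0_iff)
    next
      case False
      with \<alpha> p(2) q(2) c_pos have "0 < c \<alpha>" by (auto simp: \<nu> less_le)
      moreover from \<alpha> g_share have "g \<alpha> * \<nu> \<alpha> = p \<alpha> * c \<alpha>" by blast
      ultimately show ?thesis by (simp add: r)
    qed
  qed
  moreover have "\<nu> \<in> rvec A" "(\<Sum>\<alpha>\<in>A. \<nu> \<alpha>) = 0"
    using p q by (auto simp: \<nu> rvec_def sum.distrib)
  ultimately have "p = (\<lambda>\<alpha>. r * \<nu> \<alpha>)"
    using rvec_eq_scaled_if_sum_zero[OF fin \<beta> p(1) _ p(3)] by blast
  with not_multiple show False by blast
qed

lemma rel_entr_not_infinity:
  assumes "rel_entr S \<nu> c \<noteq> \<infinity>"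
  shows "rel_entr S \<nu> c = ereal (\<Sum>\<alpha>\<in>S. if \<nu> \<alpha> = 0 then 0 else \<nu> \<alpha> * ln (\<nu> \<alpha> / c \<alpha>))"
    and "\<forall>\<alpha>\<in>S. 0 < \<nu> \<alpha> \<longrightarrow> 0 < c \<alpha>"
proof -
  have "\<not> ((\<exists>\<alpha>\<in>S. \<nu> \<alpha> < 0 \<or> c \<alpha> < 0) \<or> (\<exists>\<alpha>\<in>S. 0 < \<nu> \<alpha> \<and> c \<alpha> = 0))"
    using assms unfolding rel_entr_def by argo
  then show "rel_entr S \<nu> c = ereal (\<Sum>\<alpha>\<in>S. if \<nu> \<alpha> = 0 then 0 else \<nu> \<alpha> * ln (\<nu> \<alpha> / c \<alpha>))"
    and "\<forall>\<alpha>\<in>S. 0 < \<nu> \<alpha> \<longrightarrow> 0 < c \<alpha>"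
    by (simp_all add: rel_entr_def) (use not_less_iff_gr_or_eq in blast)
qed

lemma supp_fun_upper: "x \<in> X \<Longrightarrow> ereal (y \<bullet> x) \<le> supp_fun X y"
  unfolding supp_fun_def by (rule SUP_upper)

lemma supp_fun_neq_minf: "X \<noteq> {} \<Longrightarrow> supp_fun X y \<noteq> -\<infinity>"
proof -
  assume "X \<noteq> {}"
  then obtain x where "x \<in> X" by blast
  from supp_fun_upper[OF this, of y] show ?thesis by auto
qed

lemma Amap_scaled_le_supp_fun:
  assumes "supp_fun X (- Amap A \<mu>) = ereal S" "x \<in> X" "0 \<le> t"
  shows "- (Amap A (\<lambda>\<alpha>. t * \<mu> \<alpha>) \<bullet> x) \<le> t * S"
proof -
  have "- (Amap A \<mu> \<bullet> x) \<le> S"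
    using supp_fun_upper[OF assms(2), of "- Amap A \<mu>"] assms(1) by simp
  with assms(3) have "t * - (Amap A \<mu> \<bullet> x) \<le> t * S" by (rule mult_left_mono[rotated])
  moreover have "Amap A (\<lambda>\<alpha>. t * \<mu> \<alpha>) = t *\<^sub>R Amap A \<mu>"
    by (simp add: Amap_def scaleR_sum_right)
  ultimately show ?thesis by simp
qed

lemma ereal_convex_comb_eq_real:
  fixes a b :: ereal
  assumes "0 < t" "t < 1" "a \<noteq> -\<infinity>" "b \<noteq> -\<infinity>" "ereal t * a + ereal (1 - t) * b = ereal s"
  obtains x y where "a = ereal x" "b = ereal y" "s = t * x + (1 - t) * y"
proof (cases a)
  case (real x)
  show ?thesis
  proof (cases b)
    case (real y)
    with \<open>a = ereal x\<close> assms(5) that show ?thesis by simp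
  qed (use assms real in auto)
qed (use assms in \<open>auto split: ereal.splits\<close>)

lemma N_set_scaled:
  assumes "u \<in> N_set A \<beta>" "0 \<le> t"
  shows "(\<lambda>\<alpha>. t * u \<alpha>) \<in> N_set A \<beta>"
  using assms unfolding N_set_def rvec_def by (simp flip: sum_distrib_left)

lemma conv_fam_vertex:
  assumes "i < k"
  shows "\<nu>s i \<in> conv_fam k \<nu>s"
proof -
  have "(\<Sum>j<k. (if j = i then 1 else 0) * \<nu>s j \<alpha>) = \<nu>s i \<alpha>" for \<alpha>
  proof -
    have "(\<Sum>j<k. (if j = i then 1 else 0) * \<nu>s j \<alpha>) = (\<Sum>j<k. if j = i then \<nu>s j \<alpha> else 0)"
      by (rule sum.cong) auto
    with assms show ?thesis by simp
  qed
  moreover have "(\<Sum>j<k. if j = i then 1 else 0 :: real) = 1"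
    using assms by simp
  ultimately show ?thesis
    unfolding conv_fam_def by (intro CollectI exI[of _ "\<lambda>j. if j = i then 1 else 0"]) auto
qed

lemma conv_fam_subset_N_set:
  assumes "\<forall>i<k. \<nu>s i \<in> N_set A \<beta>"
  shows "conv_fam k \<nu>s \<subseteq> N_set A \<beta>"
proof
  fix \<mu> assume "\<mu> \<in> conv_fam k \<nu>s"
  then obtain t where t: "\<forall>i<k. 0 \<le> t i" and \<mu>: "\<mu> = (\<lambda>\<alpha>. \<Sum>i<k. t i * \<nu>s i \<alpha>)"
    by (auto simp: conv_fam_def)
  have rvec: "\<And>i x. i < k \<Longrightarrow> x \<notin> A \<Longrightarrow> \<nu>s i x = 0"
    and nonneg: "\<And>i \<alpha>. i < k \<Longrightarrow> \<alpha> \<in> A - {\<beta>} \<Longrightarrow> 0 \<le> \<nu>s i \<alpha>"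
    and sum_zero: "\<And>i. i < k \<Longrightarrow> (\<Sum>\<alpha>\<in>A. \<nu>s i \<alpha>) = 0"
    using assms by (auto simp: N_set_def rvec_def)
  have "\<mu> \<in> rvec A"
    unfolding rvec_def \<mu> using rvec by (auto intro!: sum.neutral)
  moreover have "\<forall>\<alpha>\<in>A - {\<beta>}. 0 \<le> \<mu> \<alpha>"
    unfolding \<mu> using t nonneg by (auto intro!: sum_nonneg mult_nonneg_nonneg)
  moreover have "(\<Sum>\<alpha>\<in>A. \<mu> \<alpha>) = (\<Sum>i<k. t i * (\<Sum>\<alpha>\<in>A. \<nu>s i \<alpha>))"
    by (simp add: \<mu> sum.swap[of _ A] sum_distrib_left)
  then have "(\<Sum>\<alpha>\<in>A. \<mu> \<alpha>) = 0"
    using sum_zero by simp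
  ultimately show "\<mu> \<in> N_set A \<beta>" by (simp add: N_set_def)
qed

lemma conv_comb_split_off:
  assumes i: "i < k" and \<theta>: "\<forall>j<k. 0 \<le> \<theta> j" "(\<Sum>j<k. \<theta> j) = 1" "\<theta> i < 1"
  obtains w where "w \<in> conv_fam k \<nu>s"
    and "(\<lambda>\<alpha>. \<Sum>j<k. \<theta> j * \<nu>s j \<alpha>) = (\<lambda>\<alpha>. \<theta> i * \<nu>s i \<alpha> + (1 - \<theta> i) * w \<alpha>)"
proof -
  define \<tau> where "\<tau> = (\<lambda>j. if j = i then 0 else \<theta> j / (1 - \<theta> i))"
  define w where "w = (\<lambda>\<alpha>. \<Sum>j<k. \<tau> j * \<nu>s j \<alpha>)"
  have \<tau>_i: "\<tau> i = 0" by (simp add: \<tau>_def)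
  have rest: "(\<Sum>j<k. f j) = f i + (\<Sum>j\<in>{..<k} - {i}. f j)" for f :: "nat \<Rightarrow> real"
    using i by (intro sum.remove) auto
  have \<tau>_rest: "(\<Sum>j\<in>{..<k} - {i}. (1 - \<theta> i) * \<tau> j * f j) = (\<Sum>j\<in>{..<k} - {i}. \<theta> j * f j)"
    for f :: "nat \<Rightarrow> real"
    using \<theta>(3) by (intro sum.cong) (auto simp: \<tau>_def)
  show ?thesis
  proof (rule that)
    have "(1 - \<theta> i) * (\<Sum>j<k. \<tau> j) = 1 - \<theta> i"
      using rest[of \<tau>] rest[of \<theta>] \<tau>_rest[of "\<lambda>_. 1"] \<theta>(2) by (simp add: \<tau>_def sum_distrib_left)
    then have "(\<Sum>j<k. \<tau> j) = 1" using \<theta>(3) by simp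
    then show "w \<in> conv_fam k \<nu>s"
      using \<theta>(1,3) unfolding conv_fam_def w_def by (auto simp: \<tau>_def)
    show "(\<lambda>\<alpha>. \<Sum>j<k. \<theta> j * \<nu>s j \<alpha>) = (\<lambda>\<alpha>. \<theta> i * \<nu>s i \<alpha> + (1 - \<theta> i) * w \<alpha>)"
    proof
      fix \<alpha>
      have "(1 - \<theta> i) * w \<alpha> = (\<Sum>j\<in>{..<k} - {i}. (1 - \<theta> i) * \<tau> j * \<nu>s j \<alpha>)"
        using rest[of "\<lambda>j. \<tau> j * \<nu>s j \<alpha>"] by (simp add: w_def \<tau>_i sum_distrib_left mult.assoc)
      also have "\<dots> = (\<Sum>j\<in>{..<k} - {i}. \<theta> j * \<nu>s j \<alpha>)"
        by (rule \<tau>_rest)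
      finally show "(\<Sum>j<k. \<theta> j * \<nu>s j \<alpha>) = \<theta> i * \<nu>s i \<alpha> + (1 - \<theta> i) * w \<alpha>"
        using rest[of "\<lambda>j. \<theta> j * \<nu>s j \<alpha>"] by simp
    qed
  qed
qed

lemma weight_lt_one:
  fixes \<theta> :: "nat \<Rightarrow> real"
  assumes "i < k" "j < k" "i \<noteq> j" "\<forall>l<k. 0 < \<theta> l" "(\<Sum>l<k. \<theta> l) = 1"
  shows "\<theta> i < 1"
proof -
  have "(\<Sum>l\<in>{i, j}. \<theta> l) \<le> (\<Sum>l<k. \<theta> l)"
    using assms by (intro sum_mono2) (auto intro: less_imp_le)
  moreover from assms(2,4) have "0 < \<theta> j" by blast
  ultimately show ?thesis using assms(3,5) by simp
qed

lemma proportional_if_multiples: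
  fixes u v \<nu> :: "'a \<Rightarrow> real"
  assumes "u = (\<lambda>\<alpha>. r * \<nu> \<alpha>)" "v = (\<lambda>\<alpha>. s * \<nu> \<alpha>)"
  shows "proportional u v"
proof (cases "s = 0")
  case True
  with assms(2) have "v = (\<lambda>\<alpha>. 0 * u \<alpha>)" by simp
  then show ?thesis unfolding proportional_def by blast
next
  case False
  with assms have "u = (\<lambda>\<alpha>. (r / s) * v \<alpha>)" by auto
  then show ?thesis unfolding proportional_def by blast
qed

lemma exists_not_multiple:
  fixes \<nu>s :: "nat \<Rightarrow> 'a \<Rightarrow> real" and \<nu> :: "'a \<Rightarrow> real"
  assumes "2 \<le> k" "\<forall>i<k. \<forall>j<k. i \<noteq> j \<longrightarrow> \<not> proportional (\<nu>s i) (\<nu>s j)"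
  obtains i where "i < k" "\<forall>r. \<nu>s i \<noteq> (\<lambda>\<alpha>. r * \<nu> \<alpha>)"
proof -
  have not_prop: "\<not> proportional (\<nu>s 0) (\<nu>s 1)" using assms by auto
  show ?thesis
  proof (cases "\<exists>r. \<nu>s 0 = (\<lambda>\<alpha>. r * \<nu> \<alpha>)")
    case True
    then obtain r where r: "\<nu>s 0 = (\<lambda>\<alpha>. r * \<nu> \<alpha>)" by blast
    have "1 < k" using assms(1) by simp
    moreover have "\<forall>s. \<nu>s 1 \<noteq> (\<lambda>\<alpha>. s * \<nu> \<alpha>)"
      using proportional_if_multiples[OF r] not_prop by blast
    ultimately show ?thesis by (rule that)
  next
    case False
    moreover have "0 < k" using assms(1) by simp
    ultimately show ?thesis using that by blast
  qed
qed

lemma not_extreme_ray_if_affine_split: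
  assumes X: "X \<noteq> {}" and fin: "finite A" and \<beta>: "\<beta> \<in> A" and c: "c \<in> AGE_cone X A \<beta>"
    and u: "u \<in> N_set A \<beta>" and w: "w \<in> N_set A \<beta>" and t: "0 < t" "t < 1"
    and \<nu>: "\<nu> = (\<lambda>\<alpha>. t * u \<alpha> + (1 - t) * w \<alpha>)"
    and not_multiple: "\<forall>r. u \<noteq> (\<lambda>\<alpha>. r * \<nu> \<alpha>)"
    and affine: "supp_fun X (- Amap A \<nu>)
      = ereal t * supp_fun X (- Amap A u) + ereal (1 - t) * supp_fun X (- Amap A w)"
    and certificate: "supp_fun X (- Amap A \<nu>) + rel_entr (A - {\<beta>}) \<nu> (\<lambda>\<alpha>. exp 1 * c \<alpha>)
      \<le> ereal (c \<beta>)"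
  shows "\<not> generates_extreme_ray (AGE_cone X A \<beta>) c"
proof -
  let ?\<sigma> = "\<lambda>\<mu>. supp_fun X (- Amap A \<mu>)"
  let ?D = "rel_entr (A - {\<beta>}) \<nu> (\<lambda>\<alpha>. exp 1 * c \<alpha>)"
  have "?D \<noteq> \<infinity>"
    using certificate supp_fun_neq_minf[OF X] by auto
  note D = rel_entr_not_infinity[OF this]
  have "?\<sigma> \<nu> \<noteq> \<infinity>"
    using certificate D(1) by auto
  with supp_fun_neq_minf[OF X] obtain S where S: "?\<sigma> \<nu> = ereal S"
    by (cases "?\<sigma> \<nu>") auto
  have "ereal t * ?\<sigma> u + ereal (1 - t) * ?\<sigma> w = ereal S"
    using affine S by simp
  then obtain Su Sw where Su: "?\<sigma> u = ereal Su" and Sw: "?\<sigma> w = ereal Sw"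
    and S_eq: "S = t * Su + (1 - t) * Sw"
    by (rule ereal_convex_comb_eq_real[OF t supp_fun_neq_minf[OF X] supp_fun_neq_minf[OF X]])
  have tu: "(\<lambda>\<alpha>. t * u \<alpha>) \<in> N_set A \<beta>" and tw: "(\<lambda>\<alpha>. (1 - t) * w \<alpha>) \<in> N_set A \<beta>"
    using t u w by (simp_all add: N_set_scaled)
  show ?thesis
  proof (rule not_extreme_ray_if_AGE_split[OF fin \<beta> c _ _ _ _ _ _ \<nu>])
    show "\<forall>\<alpha>\<in>A - {\<beta>}. 0 < \<nu> \<alpha> \<longrightarrow> 0 < c \<alpha>"
      using D(2) by (simp add: zero_less_mult_iff)
    show "\<forall>x\<in>X. - (Amap A (\<lambda>\<alpha>. t * u \<alpha>) \<bullet> x) \<le> t * Su"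
      using Su t by (simp add: Amap_scaled_le_supp_fun)
    show "\<forall>x\<in>X. - (Amap A (\<lambda>\<alpha>. (1 - t) * w \<alpha>) \<bullet> x) \<le> (1 - t) * Sw"
      using Sw t by (simp add: Amap_scaled_le_supp_fun)
    show "t * Su + (1 - t) * Sw
        + (\<Sum>\<alpha>\<in>A - {\<beta>}. if \<nu> \<alpha> = 0 then 0 else \<nu> \<alpha> * ln (\<nu> \<alpha> / (exp 1 * c \<alpha>))) \<le> c \<beta>"
      using certificate D(1) S S_eq by simp
    show "\<forall>r. (\<lambda>\<alpha>. t * u \<alpha>) \<noteq> (\<lambda>\<alpha>. r * \<nu> \<alpha>)"
    proof (intro allI notI)
      fix r assume "(\<lambda>\<alpha>. t * u \<alpha>) = (\<lambda>\<alpha>. r * \<nu> \<alpha>)"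
      then have "u = (\<lambda>\<alpha>. (r / t) * \<nu> \<alpha>)"
        using t by (auto simp: fun_eq_iff field_simps)
      with not_multiple show False by blast
    qed
  qed (use tu tw in \<open>simp_all add: N_set_def\<close>)
qed

theorem lemma4p1:
  fixes X :: "(real ^ 'n) set" and A :: "(real ^ 'n) set" and \<beta> :: "real ^ 'n"
    and c \<nu> :: "real ^ 'n \<Rightarrow> real"
    and k :: nat and \<theta> :: "nat \<Rightarrow> real" and \<nu>s :: "nat \<Rightarrow> real ^ 'n \<Rightarrow> real"
  assumes "X \<noteq> {}" and "closed X" and "convex X"
    and "finite A" and "A \<noteq> {}" and "exp_lin_indep X A"
    and "\<beta> \<in> A"
    and "c \<in> AGE_cone X A \<beta>" and "c \<beta> < 0"
    and "\<nu> \<in> rvec A" and "(\<Sum>\<alpha>\<in>A. \<nu> \<alpha>) = 0" and "\<nu> \<noteq> (\<lambda>_. 0)"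
    and "supp_fun X (- Amap A \<nu>) + rel_entr (A - {\<beta>}) \<nu> (\<lambda>\<alpha>. exp 1 * c \<alpha>) \<le> ereal (c \<beta>)"
    and "k \<ge> 2"
    and "\<forall>i<k. \<theta> i > 0" and "(\<Sum>i<k. \<theta> i) = 1"
    and "\<forall>i<k. \<nu>s i \<in> N_set A \<beta>"
    and "\<forall>i<k. \<forall>j<k. i \<noteq> j \<longrightarrow> \<not> proportional (\<nu>s i) (\<nu>s j)"
    and "\<nu> = (\<lambda>\<alpha>. \<Sum>i<k. \<theta> i * \<nu>s i \<alpha>)"
    and "affine_on_ereal (conv_fam k \<nu>s) (\<lambda>\<mu>. supp_fun X (- Amap A \<mu>))"
  shows "\<not> generates_extreme_ray (AGE_cone X A \<beta>) c"
proof -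
  obtain i where i: "i < k" and not_multiple: "\<forall>r. \<nu>s i \<noteq> (\<lambda>\<alpha>. r * \<nu> \<alpha>)"
    by (rule exists_not_multiple[OF assms(14,18)])
  define j where "j = (if i = 0 then 1 else 0 :: nat)"
  have j: "j < k" "i \<noteq> j"
    using assms(14) by (auto simp: j_def)
  have \<theta>_i: "0 < \<theta> i" "\<theta> i < 1"
    using assms(15) i weight_lt_one[OF i j assms(15,16)] by auto
  have \<theta>_nonneg: "\<forall>j<k. 0 \<le> \<theta> j"
    using assms(15) by (auto intro: less_imp_le)
  obtain w where w: "w \<in> conv_fam k \<nu>s"
    and "(\<lambda>\<alpha>. \<Sum>j<k. \<theta> j * \<nu>s j \<alpha>) = (\<lambda>\<alpha>. \<theta> i * \<nu>s i \<alpha> + (1 - \<theta> i) * w \<alpha>)"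
    by (rule conv_comb_split_off[OF i \<theta>_nonneg assms(16) \<theta>_i(2)])
  with assms(19) have split: "\<nu> = (\<lambda>\<alpha>. \<theta> i * \<nu>s i \<alpha> + (1 - \<theta> i) * w \<alpha>)"
    by simp
  have "supp_fun X (- Amap A \<nu>) = ereal (\<theta> i) * supp_fun X (- Amap A (\<nu>s i))
      + ereal (1 - \<theta> i) * supp_fun X (- Amap A w)"
    using assms(20)[unfolded affine_on_ereal_def, rule_format, OF conv_fam_vertex[OF i] w, of "\<theta> i"]
      \<theta>_i split by simp
  moreover have "\<nu>s i \<in> N_set A \<beta>" "w \<in> N_set A \<beta>"
    using assms(17) i conv_fam_subset_N_set[OF assms(17)] w by auto
  ultimately show ?thesis
    using not_extreme_ray_if_affine_split[OF assms(1,4,7,8) _ _ \<theta>_i split not_multiple _ assms(13)]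
    by blast
qed

end
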